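(* Let $n\ge 2$ and let $K\subset\mathbb{R}^n$ be bounded and not contained in any $1$-dimensional linear subspace. Then (i) $K\in\mathcal{C}_e^n$ if and only if $K=\mathrm{cyl}(K)$; and (ii) $K^{\diamond\diamond}=\mathrm{cyl}(K)$.
   Context: For $x,y\in\mathbb{R}^n$ let $[x,y]=\sqrt{|x|^2|y|^2-(x\cdot y)^2}$. The sine polar body of $K$ is $K^{\diamond}=\{x\in\mathbb{R}^n:[x,y]\le1\text{ for all }y\in K\}$ and $K^{\diamond\diamond}=(K^{\diamond})^{\diamond}$. A closed solid cylinder is a set $C^{-}(u,r)=\{x\in\mathbb{R}^n:[x,u]\le r\}$ with $u\in S^{n-1}$, $r>0$. $\mathcal{C}_e^n$ is the class of origin-symmetric convex bodies in $\mathbb{R}^n$ that are intersections of closed solid cylinders. For a bounded set $E$ not contained in any $1$-dimensional subspace, its cylindrical hull $\mathrm{cyl}(E)$ is the intersection of all closed solid cylinders $C^{-}(u,r)$ containing $E$. *)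

theory Defs
  imports "HOL-Analysis.Analysis"
begin

definition sine_br :: "'a::euclidean_space \<Rightarrow> 'a \<Rightarrow> real" where
  "sine_br x y = sqrt ((norm x)\<^sup>2 * (norm y)\<^sup>2 - (x \<bullet> y)\<^sup>2)"

definition sine_polar :: "'a::euclidean_space set \<Rightarrow> 'a set" where
  "sine_polar K = {x. \<forall>y\<in>K. sine_br x y \<le> 1}"

definition solid_cyl :: "'a::euclidean_space \<Rightarrow> real \<Rightarrow> 'a set" where
  "solid_cyl u r = {x. sine_br x u \<le> r}"

definition closed_solid_cylinders :: "'a::euclidean_space set set" where
  "closed_solid_cylinders = {solid_cyl u r | u r. norm u = 1 \<and> r > 0}"

definition convex_body :: "'a::euclidean_space set \<Rightarrow> bool" where
  "convex_body K \<longleftrightarrow> compact K \<and> convex K \<and> interior K \<noteq> {}"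

definition Ce :: "'a::euclidean_space set set" where
  "Ce = {K. convex_body K \<and> uminus ` K = K \<and>
            (\<exists>F. F \<subseteq> closed_solid_cylinders \<and> K = \<Inter>F)}"

definition cyl_hull :: "'a::euclidean_space set \<Rightarrow> 'a set" where
  "cyl_hull E = \<Inter>{C \<in> closed_solid_cylinders. E \<subseteq> C}"

end

theory Submission
  imports Defs
begin

text \<open>
  The sine bracket is symmetric, and the sine polar of a single point \<open>z \<noteq> 0\<close> is the
  cylinder with axis \<open>z / |z|\<close> and radius \<open>1 / |z|\<close>; every closed solid cylinder arises
  this way. Hence \<open>z \<in> K\<^sup>\<diamond>\<close> exactly when the cylinder of \<open>z\<close> contains \<open>K\<close>, and
  \<open>K\<^sup>\<diamond>\<^sup>\<diamond>\<close>, the intersection of the polars of the points of \<open>K\<^sup>\<diamond>\<close>, is \<open>cyl(K)\<close>.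
  For (i), an intersection of cylinders is its own cylindrical hull, and conversely
  \<open>cyl(K)\<close> is a symmetric convex body: it is closed, convex and symmetric as an
  intersection of such sets; it is bounded because \<open>K\<close> lies in the cylinder of radius
  \<open>R\<close> about every axis and two cylinders with orthogonal axes (here \<open>n \<ge> 2\<close> is used)
  meet in a bounded set; and it contains a ball about \<open>0\<close>, because two linearly
  independent points of \<open>K\<close> keep a positive distance, uniformly over the compact
  sphere of directions, from every line through the origin.
\<close>

lemma sine_br_commute: "sine_br x y = sine_br y x"
  unfolding sine_br_def by (simp add: inner_commute mult.commute)

lemma sine_br_scaleR_right: "sine_br x (c *\<^sub>R y) = \<bar>c\<bar> * sine_br x y"
proof -
  have "(norm x)\<^sup>2 * (norm (c *\<^sub>R y))\<^sup>2 - (x \<bullet> (c *\<^sub>R y))\<^sup>2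
        = c\<^sup>2 * ((norm x)\<^sup>2 * (norm y)\<^sup>2 - (x \<bullet> y)\<^sup>2)"
    by (simp add: power_mult_distrib algebra_simps)
  then show ?thesis unfolding sine_br_def by (simp add: real_sqrt_mult)
qed

lemma sine_br_minus_left: "sine_br (- x) y = sine_br x y"
  unfolding sine_br_def by simp

lemma sine_br_zero_right: "sine_br x 0 = 0"
  unfolding sine_br_def by simp

lemma sine_br_nonneg: "0 \<le> sine_br x y"
proof -
  have "(x \<bullet> y)\<^sup>2 \<le> (norm x)\<^sup>2 * (norm y)\<^sup>2"
    using Cauchy_Schwarz_ineq[of x y] by (simp add: power2_norm_eq_inner)
  then show ?thesis
    unfolding sine_br_def by simp
qed

lemma sine_br_unit_eq_norm:
  assumes "norm u = 1"
  shows "sine_br x u = norm (x - (x \<bullet> u) *\<^sub>R u)"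
proof -
  have "u \<bullet> u = 1" using assms by (simp add: norm_eq_sqrt_inner)
  then have "(norm (x - (x \<bullet> u) *\<^sub>R u))\<^sup>2 = (norm x)\<^sup>2 - (x \<bullet> u)\<^sup>2"
    unfolding power2_norm_eq_inner
    by (simp add: inner_diff_left inner_diff_right power2_eq_square inner_commute algebra_simps)
  then have "sine_br x u = sqrt ((norm (x - (x \<bullet> u) *\<^sub>R u))\<^sup>2)"
    unfolding sine_br_def using assms by simp
  then show ?thesis by simp
qed

lemma sine_br_unit_le_norm:
  assumes "norm u = 1"
  shows "sine_br x u \<le> norm x"
proof -
  have "(norm x)\<^sup>2 * (norm u)\<^sup>2 - (x \<bullet> u)\<^sup>2 \<le> (norm x)\<^sup>2"
    using assms by simp
  then have "sine_br x u \<le> sqrt ((norm x)\<^sup>2)"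
    unfolding sine_br_def by (rule real_sqrt_le_mono)
  then show ?thesis by simp
qed

lemma sine_br_unit_eq_0_imp_in_span:
  assumes "norm u = 1" and "sine_br x u = 0"
  shows "x \<in> span {u}"
proof -
  have "x = (x \<bullet> u) *\<^sub>R u"
    using assms by (simp add: sine_br_unit_eq_norm)
  then show ?thesis
    by (metis span_base span_mul singletonI)
qed

lemma continuous_on_sine_br: "continuous_on S (sine_br y)"
  unfolding sine_br_def by (intro continuous_intros)

lemma convex_solid_cyl:
  assumes "norm u = 1"
  shows "convex (solid_cyl u r)"
proof -
  have "solid_cyl u r = (\<lambda>x. x - (x \<bullet> u) *\<^sub>R u) -` cball 0 r"
    using assms by (auto simp: solid_cyl_def sine_br_unit_eq_norm)
  moreover have "linear (\<lambda>x. x - (x \<bullet> u) *\<^sub>R u)"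
    by (auto simp: linear_iff inner_add_left scaleR_add_left algebra_simps)
  ultimately show ?thesis by (simp add: convex_linear_vimage)
qed

lemma closed_solid_cyl: "closed (solid_cyl u r)"
proof -
  have "continuous_on UNIV (\<lambda>x. sine_br x u)"
    unfolding sine_br_def by (intro continuous_intros)
  then show ?thesis
    unfolding solid_cyl_def by (intro closed_Collect_le continuous_intros) auto
qed

lemma solid_cyl_in_closed_solid_cylinders:
  "norm u = 1 \<Longrightarrow> r > 0 \<Longrightarrow> solid_cyl u r \<in> closed_solid_cylinders"
  unfolding closed_solid_cylinders_def by blast

lemma sine_polar_singleton_zero: "sine_polar {0} = UNIV"
  by (simp add: sine_polar_def sine_br_zero_right)

lemma sine_polar_singleton_eq_solid_cyl:
  assumes "z \<noteq> 0"
  shows "sine_polar {z} = solid_cyl (sgn z) (1 / norm z)"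
proof -
  have "sine_br x z = norm z * sine_br x (sgn z)" for x
    using sine_br_scaleR_right[of x "norm z" "sgn z"] assms by (simp add: sgn_div_norm)
  then show ?thesis
    using assms by (simp add: sine_polar_def solid_cyl_def field_simps)
qed

lemma closed_solid_cylinders_eq_sine_polar_singletons:
  "closed_solid_cylinders = (\<lambda>z. sine_polar {z}) ` (- {0})"
proof (intro equalityI subsetI)
  fix C assume "C \<in> closed_solid_cylinders"
  then obtain u r where u: "norm u = 1" and r: "r > 0" and C: "C = solid_cyl u r"
    unfolding closed_solid_cylinders_def by blast
  have "u /\<^sub>R r \<noteq> 0" "sgn (u /\<^sub>R r) = u" "1 / norm (u /\<^sub>R r) = r"
    using u r by (auto simp: sgn_div_norm field_simps)
  then have "C = sine_polar {u /\<^sub>R r}"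
    by (simp add: C sine_polar_singleton_eq_solid_cyl)
  then show "C \<in> (\<lambda>z. sine_polar {z}) ` (- {0})"
    using \<open>u /\<^sub>R r \<noteq> 0\<close> by blast
next
  fix C assume "C \<in> (\<lambda>z. sine_polar {z}) ` (- {0})"
  then obtain z where "z \<noteq> 0" and C: "C = solid_cyl (sgn z) (1 / norm z)"
    using sine_polar_singleton_eq_solid_cyl by auto
  then show "C \<in> closed_solid_cylinders"
    by (simp add: solid_cyl_in_closed_solid_cylinders norm_sgn)
qed

lemma subset_sine_polar_singleton_iff: "K \<subseteq> sine_polar {z} \<longleftrightarrow> z \<in> sine_polar K"
  by (auto simp: sine_polar_def sine_br_commute)

lemma sine_polar_sine_polar_eq_cyl_hull: "sine_polar (sine_polar K) = cyl_hull K"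
proof -
  have "{C \<in> closed_solid_cylinders. K \<subseteq> C} = (\<lambda>z. sine_polar {z}) ` (sine_polar K - {0})"
    unfolding closed_solid_cylinders_eq_sine_polar_singletons
    using subset_sine_polar_singleton_iff by blast
  then have "cyl_hull K = (\<Inter>z \<in> sine_polar K - {0}. sine_polar {z})"
    unfolding cyl_hull_def by simp
  also have "\<dots> = (\<Inter>z \<in> sine_polar K. sine_polar {z})"
    by (auto simp: sine_polar_singleton_zero)
  also have "\<dots> = sine_polar (sine_polar K)"
    by (auto simp: sine_polar_def)
  finally show ?thesis ..
qed

lemma cyl_hull_subset:
  assumes "C \<in> closed_solid_cylinders" and "K \<subseteq> C"
  shows "cyl_hull K \<subseteq> C"
  using assms unfolding cyl_hull_def by blast

lemma subset_cyl_hull: "K \<subseteq> cyl_hull K"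
  unfolding cyl_hull_def by blast

lemma cyl_hull_Inter:
  assumes "F \<subseteq> closed_solid_cylinders"
  shows "cyl_hull (\<Inter>F) = \<Inter>F"
  using assms subset_cyl_hull unfolding cyl_hull_def by blast

lemma convex_cyl_hull: "convex (cyl_hull K)"
  unfolding cyl_hull_def closed_solid_cylinders_def
  by (rule convex_Inter) (auto intro: convex_solid_cyl)

lemma closed_cyl_hull: "closed (cyl_hull K)"
  unfolding cyl_hull_def closed_solid_cylinders_def
  by (rule closed_Inter) (auto intro: closed_solid_cyl)

lemma uminus_image_sine_polar: "uminus ` sine_polar L = sine_polar L"
proof -
  have minus_mem_iff: "- x \<in> sine_polar L \<longleftrightarrow> x \<in> sine_polar L" for x
    by (simp add: sine_polar_def sine_br_minus_left)
  then have "x \<in> uminus ` sine_polar L" if "x \<in> sine_polar L" for x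
    using that by (metis image_eqI minus_minus)
  with minus_mem_iff show ?thesis by blast
qed

lemma norm_le_of_mem_orthogonal_solid_cyls:
  assumes u: "norm u = 1" and v: "norm v = 1" and "u \<bullet> v = 0"
    and "x \<in> solid_cyl u r" and "x \<in> solid_cyl v s"
  shows "norm x \<le> r + s"
proof -
  have "v \<bullet> u = 0"
    using \<open>u \<bullet> v = 0\<close> by (simp add: inner_commute)
  then have "x \<bullet> u = (x - (x \<bullet> v) *\<^sub>R v) \<bullet> u"
    by (simp add: inner_diff_left)
  also have "\<bar>\<dots>\<bar> \<le> norm (x - (x \<bullet> v) *\<^sub>R v)"
    using Cauchy_Schwarz_ineq2[of "x - (x \<bullet> v) *\<^sub>R v" u] u by simp
  also have "\<dots> \<le> s"
    using assms(5) v by (simp add: solid_cyl_def sine_br_unit_eq_norm)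
  finally have "norm ((x \<bullet> u) *\<^sub>R u) \<le> s"
    using u by simp
  moreover have "norm (x - (x \<bullet> u) *\<^sub>R u) \<le> r"
    using assms(4) u by (simp add: solid_cyl_def sine_br_unit_eq_norm)
  moreover have "norm x \<le> norm (x - (x \<bullet> u) *\<^sub>R u) + norm ((x \<bullet> u) *\<^sub>R u)"
    by (metis diff_add_cancel norm_triangle_ineq)
  ultimately show ?thesis by linarith
qed

lemma bounded_cyl_hull:
  fixes K :: "'a::euclidean_space set"
  assumes "DIM('a) \<ge> 2" and "bounded K"
  shows "bounded (cyl_hull K)"
proof -
  obtain R where R: "R > 0" "\<And>x. x \<in> K \<Longrightarrow> norm x \<le> R"
    using assms(2) bounded_pos by blast
  obtain b1 b2 :: 'a where b: "b1 \<in> Basis" "b2 \<in> Basis" "b1 \<noteq> b2"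
    using assms(1) by (metis One_nat_def card_le_Suc0_iff_eq finite_Basis not_less_eq_eq numeral_2_eq_2)
  have "cyl_hull K \<subseteq> solid_cyl b R" if "b \<in> Basis" for b :: 'a
  proof (rule cyl_hull_subset)
    show "solid_cyl b R \<in> closed_solid_cylinders"
      using that R(1) by (simp add: solid_cyl_in_closed_solid_cylinders)
    show "K \<subseteq> solid_cyl b R"
      using that R(2) sine_br_unit_le_norm[of b] unfolding solid_cyl_def
      by (force intro: order_trans)
  qed
  then have "norm x \<le> R + R" if "x \<in> cyl_hull K" for x
    using b that by (intro norm_le_of_mem_orthogonal_solid_cyls[of b1 b2]) (auto simp: inner_not_same_Basis)
  then show ?thesis
    unfolding bounded_iff by blast
qed

lemma sine_br_max_bounded_below:
  fixes y1 y2 :: "'a::euclidean_space"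
  assumes "y1 \<noteq> 0" and "y2 \<notin> span {y1}"
  obtains \<delta> where "\<delta> > 0" and "\<And>u. norm u = 1 \<Longrightarrow> \<delta> \<le> max (sine_br y1 u) (sine_br y2 u)"
proof -
  define f where "f u = max (sine_br y1 u) (sine_br y2 u)" for u
  have "continuous_on (sphere 0 1) f"
    unfolding f_def by (intro continuous_on_max continuous_on_sine_br)
  then obtain u0 where u0: "u0 \<in> sphere (0::'a) 1" and min: "\<And>u. u \<in> sphere 0 1 \<Longrightarrow> f u0 \<le> f u"
    using continuous_attains_inf[of "sphere (0::'a) 1" f] by auto
  have "f u0 > 0"
  proof (rule ccontr)
    assume "\<not> f u0 > 0"
    moreover have "norm u0 = 1"
      using u0 by simp
    ultimately have "y1 \<in> span {u0}" "y2 \<in> span {u0}"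
      unfolding f_def using sine_br_nonneg[of _ u0]
      by (auto intro!: sine_br_unit_eq_0_imp_in_span simp: order_antisym)
    then obtain c where "y1 = c *\<^sub>R u0"
      by (auto simp: span_singleton)
    with \<open>y1 \<noteq> 0\<close> have "u0 = (1 / c) *\<^sub>R y1"
      by auto
    then have "span {u0} \<subseteq> span {y1}"
      by (simp add: span_minimal span_mul span_base subspace_span)
    with \<open>y2 \<in> span {u0}\<close> have "y2 \<in> span {y1}"
      by blast
    with assms(2) show False ..
  qed
  with min show thesis
    by (intro that[of "f u0"]) (auto simp: f_def)
qed

lemma zero_in_interior_cyl_hull:
  fixes K :: "'a::euclidean_space set"
  assumes "\<not> (\<exists>v. K \<subseteq> span {v})"
  shows "0 \<in> interior (cyl_hull K)"
proof -
  obtain y1 where y1: "y1 \<in> K" "y1 \<noteq> 0"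
    using assms[unfolded not_ex, rule_format, of 0] by auto
  obtain y2 where y2: "y2 \<in> K" "y2 \<notin> span {y1}"
    using assms by blast
  obtain \<delta> where "\<delta> > 0" and \<delta>: "\<And>u. norm u = 1 \<Longrightarrow> \<delta> \<le> max (sine_br y1 u) (sine_br y2 u)"
    using sine_br_max_bounded_below[OF y1(2) y2(2)] by blast
  have "ball 0 \<delta> \<subseteq> cyl_hull K"
    unfolding cyl_hull_def closed_solid_cylinders_def
  proof (safe)
    fix x :: 'a and u r assume x: "x \<in> ball 0 \<delta>" and u: "norm u = 1" and "K \<subseteq> solid_cyl u r"
    then have "max (sine_br y1 u) (sine_br y2 u) \<le> r"
      using y1(1) y2(1) by (auto simp: solid_cyl_def)
    with \<delta>[OF u] have "\<delta> \<le> r"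
      by linarith
    with x sine_br_unit_le_norm[OF u, of x] show "x \<in> solid_cyl u r"
      by (simp add: solid_cyl_def)
  qed
  with \<open>\<delta> > 0\<close> show ?thesis
    using mem_interior by blast
qed

lemma cyl_hull_in_Ce:
  fixes K :: "'a::euclidean_space set"
  assumes "DIM('a) \<ge> 2" and "bounded K" and "\<not> (\<exists>v. K \<subseteq> span {v})"
  shows "cyl_hull K \<in> Ce"
proof -
  have "convex_body (cyl_hull K)"
    unfolding convex_body_def
    using closed_cyl_hull bounded_cyl_hull[OF assms(1,2)] convex_cyl_hull
      zero_in_interior_cyl_hull[OF assms(3)]
    by (auto simp: compact_eq_bounded_closed)
  moreover have "uminus ` cyl_hull K = cyl_hull K"
    using uminus_image_sine_polar by (simp flip: sine_polar_sine_polar_eq_cyl_hull)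
  ultimately show ?thesis
    unfolding Ce_def cyl_hull_def[of K] by blast
qed

theorem proposition3p5:
  fixes K :: "'a::euclidean_space set"
  assumes "DIM('a) \<ge> 2"
    and "bounded K"
    and "\<not> (\<exists>v. K \<subseteq> span {v})"
  shows "(K \<in> Ce \<longleftrightarrow> K = cyl_hull K) \<and> sine_polar (sine_polar K) = cyl_hull K"
proof -
  have "K = cyl_hull K" if "K \<in> Ce"
    using that cyl_hull_Inter unfolding Ce_def by auto
  moreover have "K \<in> Ce" if "K = cyl_hull K"
    using that cyl_hull_in_Ce[OF assms] by simp
  ultimately show ?thesis
    using sine_polar_sine_polar_eq_cyl_hull by blast
qed

end
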